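(* Let $V$ be a toroidal vertex algebra. If $(W,Y_W)$ is a module for $V^0$ viewed as a toroidal vertex algebra, then $(W,Y_W^0)$ is a module for $V^0$ viewed as a vertex algebra, where $Y_W^0(u,x_0)=Y_W(u;x_0,\mathbf{x})|_{\mathbf{x}=1}$ for $u\in V^0$. Conversely, if $(W,Y_W^0)$ is a module for $V^0$ viewed as a vertex algebra, then $(W,Y_W)$ is a module for $V^0$ viewed as a toroidal vertex algebra, where $$Y_W(u;x_0,\mathbf{x})=\sum_{\mathbf{m}\in\mathbb{Z}^r}Y_W^0(u_{-1,\mathbf{m}}\mathbf{1},x_0)\mathbf{x}^{-\mathbf{m}}\quad\text{for }u\in V^0.$$ Furthermore, the category of modules for $V^0$ viewed as a toroidal vertex algebra is naturally isomorphic to the category of modules for $V^0$ viewed as a vertex algebra.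
   Context: Fix a positive integer $r$. Write $\mathbf{x}=(x_1,\dots,x_r)$, $\mathbf{x}^{\mathbf{m}}=x_1^{m_1}\cdots x_r^{m_r}$ (similarly for other variables), $\mathbf{z}\mathbf{y}=(z_1y_1,\dots,z_ry_r)$. For a vector space $W$ put $\mathcal{E}(W,r)=\mathrm{Hom}(W,W[[x_1^{\pm1},\dots,x_r^{\pm1}]]((x_0)))$ and $\mathcal{E}(W)=\mathrm{Hom}(W,W((x_0)))$. A toroidal vertex algebra is a vector space $V$ with a linear map $Y(\cdot;x_0,\mathbf{x}):V\to\mathcal{E}(V,r)$, $v\mapsto\sum_{(m_0,\mathbf{m})\in\mathbb{Z}\times\mathbb{Z}^r}v_{m_0,\mathbf{m}}x_0^{-m_0-1}\mathbf{x}^{-\mathbf{m}}$, and a vector $\mathbf{1}$ with $Y(\mathbf{1};x_0,\mathbf{x})v=v$, $Y(v;x_0,\mathbf{x})\mathbf{1}\in V[[x_0,x_1^{\pm1},\dots,x_r^{\pm1}]]$ for all $v$, and the Jacobi identity $$z_0^{-1}\delta\!\left(\tfrac{x_0-y_0}{z_0}\right)Y(u;x_0,\mathbf{z}\mathbf{y})Y(v;y_0,\mathbf{y})-z_0^{-1}\delta\!\left(\tfrac{y_0-x_0}{-z_0}\right)Y(v;y_0,\mathbf{y})Y(u;x_0,\mathbf{z}\mathbf{y})=y_0^{-1}\delta\!\left(\tfrac{x_0-z_0}{y_0}\right)Y(Y(u;z_0,\mathbf{z})v;y_0,\mathbf{y})$$ for all $u,v$, where $Y(u;x_0,\mathbf{z}\mathbf{y})=\sum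 u_{m_0,\mathbf{m}}x_0^{-m_0-1}\mathbf{z}^{-\mathbf{m}}\mathbf{y}^{-\mathbf{m}}$. Modules over a toroidal vertex algebra: vector space $W$, linear $Y_W:V\to\mathcal{E}(W,r)$ with $Y_W(\mathbf{1};x_0,\mathbf{x})=1_W$ and the Jacobi identity with $Y_W$ in the three outer operator places; module homomorphisms are linear maps intertwining all $Y_W$. $V^0=\mathrm{span}\{v_{m_0,\mathbf{m}}\mathbf{1}\mid v\in V,(m_0,\mathbf{m})\in\mathbb{Z}\times\mathbb{Z}^r\}$ is a toroidal vertex subalgebra of $V$; for any module $(W,Y_W)$ of the toroidal vertex algebra $V^0$ and $u\in V^0$ one has $Y_W(u;x_0,\mathbf{x})\in\mathcal{E}(W)[x_1^{\pm1},\dots,x_r^{\pm1}]$, so the specialization $\mathbf{x}=1$ is defined; with $Y^0(v,x_0)=Y(v;x_0,\mathbf{x})|_{\mathbf{x}=1}$, $(V^0,Y^0,\mathbf{1})$ is a vertex algebra ("$V^0$ viewed as a vertex algebra"). *)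

theory Defs
  imports "HOL-Analysis.Finite_Cartesian_Product"
begin

(* An element of E(W,r) = Hom(W, W[[x^{+-1}]]((x0))) attached to u is encoded by its
   components  Y u m0 m w  = coefficient of x0^{-m0-1} x^{-m} in Y(u;x0,x)w,
   with m0 :: int and m :: int^'r (so r = CARD('r) >= 1).
   Similarly for E(W) = Hom(W,W((x0))): Y u m0 w = coefficient of x0^{-m0-1}. *)

type_synonym ('v,'r,'w) tvo = "'v \<Rightarrow> int \<Rightarrow> int^'r \<Rightarrow> 'w \<Rightarrow> 'w"
type_synonym ('v,'w) vo = "'v \<Rightarrow> int \<Rightarrow> 'w \<Rightarrow> 'w"

(* sum of a finitely supported family indexed by nat (all such sums below are finite
   because of the truncation conditions) *)
definition fsum :: "(nat \<Rightarrow> 'w::comm_monoid_add) \<Rightarrow> 'w" where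
  "fsum f = sum f {i. f i \<noteq> 0}"

definition ibinom :: "int \<Rightarrow> nat \<Rightarrow> int" where
  "ibinom l i = (\<Prod>j<i. l - int j) div fact i"

definition isign :: "int \<Rightarrow> int" where
  "isign l = (if even l then 1 else -1)"

definition tlinear_on :: "('k::field \<Rightarrow> 'v \<Rightarrow> 'v::ab_group_add) \<Rightarrow> ('k \<Rightarrow> 'w \<Rightarrow> 'w::ab_group_add)
    \<Rightarrow> 'v set \<Rightarrow> ('v,'r::finite,'w) tvo \<Rightarrow> bool" where
  "tlinear_on sV sW S YW \<longleftrightarrow> (\<forall>a b u v m0 m w. u \<in> S \<longrightarrow> v \<in> S \<longrightarrow>
      YW (sV a u + sV b v) m0 m w = sW a (YW u m0 m w) + sW b (YW v m0 m w))"

definition vlinear_on :: "('k::field \<Rightarrow> 'v \<Rightarrow> 'v::ab_group_add) \<Rightarrow> ('k \<Rightarrow> 'w \<Rightarrow> 'w::ab_group_add)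
    \<Rightarrow> 'v set \<Rightarrow> ('v,'w) vo \<Rightarrow> bool" where
  "vlinear_on sV sW S YW \<longleftrightarrow> (\<forall>a b u v m0 w. u \<in> S \<longrightarrow> v \<in> S \<longrightarrow>
      YW (sV a u + sV b v) m0 w = sW a (YW u m0 w) + sW b (YW v m0 w))"

(* Toroidal Jacobi identity, written coefficientwise: the coefficient of
   z0^{-l-1} x0^{-m0-1} y0^{-n0-1} z^{-m} y^{-p} applied to w, for u,v in S. *)
definition toroidal_jacobi :: "('k::field \<Rightarrow> 'w \<Rightarrow> 'w::ab_group_add) \<Rightarrow> 'v set
    \<Rightarrow> ('v,'r::finite,'v) tvo \<Rightarrow> ('v,'r,'w) tvo \<Rightarrow> bool" where
  "toroidal_jacobi sW S Y YW \<longleftrightarrow> (\<forall>u\<in>S. \<forall>v\<in>S. \<forall>w l m0 n0 m p.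
     fsum (\<lambda>i. sW (of_int (ibinom m0 i)) (YW (Y u (l + int i) m v) (m0 + n0 - int i) p w))
   = fsum (\<lambda>i. sW (of_int ((-1)^i * (ibinom l i)))
        (YW u (m0 + l - int i) m (YW v (n0 + int i) (p - m) w)
         - sW (of_int (isign l)) (YW v (n0 + l - int i) (p - m) (YW u (m0 + int i) m w)))))"

definition va_jacobi :: "('k::field \<Rightarrow> 'w \<Rightarrow> 'w::ab_group_add) \<Rightarrow> 'v set
    \<Rightarrow> ('v,'v) vo \<Rightarrow> ('v,'w) vo \<Rightarrow> bool" where
  "va_jacobi sW S Y YW \<longleftrightarrow> (\<forall>u\<in>S. \<forall>v\<in>S. \<forall>w l m0 n0.
     fsum (\<lambda>i. sW (of_int (ibinom m0 i)) (YW (Y u (l + int i) v) (m0 + n0 - int i) w))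
   = fsum (\<lambda>i. sW (of_int ((-1)^i * (ibinom l i)))
        (YW u (m0 + l - int i) (YW v (n0 + int i) w)
         - sW (of_int (isign l)) (YW v (n0 + l - int i) (YW u (m0 + int i) w)))))"

definition toroidal_vertex_algebra :: "('k::field \<Rightarrow> 'v \<Rightarrow> 'v::ab_group_add)
    \<Rightarrow> ('v,'r::finite,'v) tvo \<Rightarrow> 'v \<Rightarrow> bool" where
  "toroidal_vertex_algebra sV Y one \<longleftrightarrow>
     vector_space sV
   \<and> tlinear_on sV sV UNIV Y
   \<and> (\<forall>u m0 m. Vector_Spaces.linear sV sV (Y u m0 m))
   \<and> (\<forall>u w. \<exists>N. \<forall>k\<ge>N. \<forall>m. Y u k m w = 0)
   \<and> (\<forall>k m w. Y one k m w = (if k = -1 \<and> m = 0 then w else 0))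
   \<and> (\<forall>v k m. k \<ge> 0 \<longrightarrow> Y v k m one = 0)
   \<and> toroidal_jacobi sV UNIV Y Y"

definition V0 :: "('k::field \<Rightarrow> 'v \<Rightarrow> 'v::ab_group_add) \<Rightarrow> ('v,'r::finite,'v) tvo \<Rightarrow> 'v \<Rightarrow> 'v set" where
  "V0 sV Y one = module.span sV {Y v k m one | v k m. True}"

definition toroidal_module_on :: "('k::field \<Rightarrow> 'v \<Rightarrow> 'v::ab_group_add) \<Rightarrow> ('v,'r::finite,'v) tvo
    \<Rightarrow> 'v \<Rightarrow> 'v set \<Rightarrow> ('k \<Rightarrow> 'w \<Rightarrow> 'w::ab_group_add) \<Rightarrow> ('v,'r,'w) tvo \<Rightarrow> bool" where
  "toroidal_module_on sV Y one S sW YW \<longleftrightarrow>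
     vector_space sW
   \<and> tlinear_on sV sW S YW
   \<and> (\<forall>u\<in>S. \<forall>m0 m. Vector_Spaces.linear sW sW (YW u m0 m))
   \<and> (\<forall>u\<in>S. \<forall>w. \<exists>N. \<forall>k\<ge>N. \<forall>m. YW u k m w = 0)
   \<and> (\<forall>k m w. YW one k m w = (if k = -1 \<and> m = 0 then w else 0))
   \<and> toroidal_jacobi sW S Y YW"

definition va_module_on :: "('k::field \<Rightarrow> 'v \<Rightarrow> 'v::ab_group_add) \<Rightarrow> ('v,'v) vo
    \<Rightarrow> 'v \<Rightarrow> 'v set \<Rightarrow> ('k \<Rightarrow> 'w \<Rightarrow> 'w::ab_group_add) \<Rightarrow> ('v,'w) vo \<Rightarrow> bool" where
  "va_module_on sV Y one S sW YW \<longleftrightarrow>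
     vector_space sW
   \<and> vlinear_on sV sW S YW
   \<and> (\<forall>u\<in>S. \<forall>m0. Vector_Spaces.linear sW sW (YW u m0))
   \<and> (\<forall>u\<in>S. \<forall>w. \<exists>N. \<forall>k\<ge>N. YW u k w = 0)
   \<and> (\<forall>k w. YW one k w = (if k = -1 then w else 0))
   \<and> va_jacobi sW S Y YW"

(* specialization x = 1:  coefficient of x0^{-m0-1} in Y(u;x0,x)|_{x=1} w
   (the sum over m is finite in the situations considered) *)
definition spec :: "('v,'r::finite,'w::comm_monoid_add) tvo \<Rightarrow> ('v,'w) vo" where
  "spec Y u m0 w = (\<Sum>m\<in>{m. Y u m0 m w \<noteq> 0}. Y u m0 m w)"

(* Y_W(u;x0,x) = sum_m Y_W^0(u_{-1,m} 1, x0) x^{-m} *)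
definition unspec :: "('v,'r::finite,'v) tvo \<Rightarrow> 'v \<Rightarrow> ('v,'w) vo \<Rightarrow> ('v,'r,'w) tvo" where
  "unspec Y one YW0 u m0 m w = YW0 (Y u (-1) m one) m0 w"

definition toroidal_hom :: "('k::field \<Rightarrow> 'w1 \<Rightarrow> 'w1::ab_group_add) \<Rightarrow> ('k \<Rightarrow> 'w2 \<Rightarrow> 'w2::ab_group_add)
    \<Rightarrow> 'v set \<Rightarrow> ('v,'r::finite,'w1) tvo \<Rightarrow> ('v,'r,'w2) tvo \<Rightarrow> ('w1 \<Rightarrow> 'w2) \<Rightarrow> bool" where
  "toroidal_hom sW1 sW2 S YW1 YW2 f \<longleftrightarrow> Vector_Spaces.linear sW1 sW2 f
     \<and> (\<forall>u\<in>S. \<forall>m0 m w. f (YW1 u m0 m w) = YW2 u m0 m (f w))"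

definition va_hom :: "('k::field \<Rightarrow> 'w1 \<Rightarrow> 'w1::ab_group_add) \<Rightarrow> ('k \<Rightarrow> 'w2 \<Rightarrow> 'w2::ab_group_add)
    \<Rightarrow> 'v set \<Rightarrow> ('v,'w1) vo \<Rightarrow> ('v,'w2) vo \<Rightarrow> ('w1 \<Rightarrow> 'w2) \<Rightarrow> bool" where
  "va_hom sW1 sW2 S YW1 YW2 f \<longleftrightarrow> Vector_Spaces.linear sW1 sW2 f
     \<and> (\<forall>u\<in>S. \<forall>m0 w. f (YW1 u m0 w) = YW2 u m0 (f w))"

end

theory Submission
  imports Defs
begin

text \<open>
  Write u_{-1,m}1 for the components of a vector u.  For a spanning vector v_{k,n}1 of V^0
  the Jacobi identity with the vacuum shows that only its component of degree n is nonzero, so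
  every u in V^0 is the finite sum of its components.  For a module W of the toroidal vertex
  algebra V^0, the Jacobi identity with v = 1 shows that Y_W(u_{-1,m}1; x_0, x) is exactly the
  x^{-m}-part of Y_W(u; x_0, x).  Hence Y_W is recovered by specializing x = 1 on components,
  which makes specialization and the construction
  Y_W^0 |-> sum_m Y_W^0(u_{-1,m}1, x_0) x^{-m} mutually inverse.  Since only finitely many
  components are nonzero, specializing the toroidal Jacobi identity amounts to summing it over
  finitely many z- and y-degrees, while the ordinary Jacobi identity for components is the
  toroidal one for the original vectors.
\<close>

lemma linear_map_zero: "Vector_Spaces.linear s1 s2 f \<Longrightarrow> f 0 = 0"
  by (simp add: linear_iff_module_hom module_hom.zero)

lemma linear_map_sum: "Vector_Spaces.linear s1 s2 f \<Longrightarrow> f (sum g A) = (\<Sum>a\<in>A. f (g a))"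
  by (simp add: linear_iff_module_hom module_hom.sum)

lemma fsum_eq_single: "(\<And>i. i \<noteq> i0 \<Longrightarrow> f i = 0) \<Longrightarrow> fsum f = f i0"
  unfolding fsum_def by (rule sum.mono_neutral_left[of "{i0}", simplified]) auto

lemma fsum_eq_zero: "(\<And>i. f i = 0) \<Longrightarrow> fsum f = 0"
  by (simp add: fsum_def)

lemma fsum_eq_sum_lessThan: "(\<And>i. i \<ge> N \<Longrightarrow> f i = 0) \<Longrightarrow> fsum f = sum f {..<N}"
  unfolding fsum_def by (rule sum.mono_neutral_left) (auto simp: not_less[symmetric])

lemma fsum_sum_commute:
  assumes "\<And>a i. a \<in> A \<Longrightarrow> i \<ge> K \<Longrightarrow> f a i = 0"
  shows "fsum (\<lambda>i. \<Sum>a\<in>A. f a i) = (\<Sum>a\<in>A. fsum (f a))"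
proof -
  have "fsum (\<lambda>i. \<Sum>a\<in>A. f a i) = (\<Sum>i<K. \<Sum>a\<in>A. f a i)"
    by (rule fsum_eq_sum_lessThan) (simp add: assms)
  also have "\<dots> = (\<Sum>a\<in>A. \<Sum>i<K. f a i)"
    by (rule sum.swap)
  also have "\<dots> = (\<Sum>a\<in>A. fsum (f a))"
    by (intro sum.cong refl fsum_eq_sum_lessThan[symmetric]) (simp add: assms)
  finally show ?thesis .
qed

lemma ibinom_zero_right [simp]: "ibinom l 0 = 1"
  by (simp add: ibinom_def)

lemma ibinom_zero_left: "i \<noteq> 0 \<Longrightarrow> ibinom 0 i = 0"
  unfolding ibinom_def by (subst prod_zero) (auto intro: bexI[of _ 0])

lemma ibinom_minus_one_left: "ibinom (-1) i = (-1) ^ i"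
proof -
  have "(\<Prod>j<i. (-1::int) - int j) = (-1) ^ i * fact i"
    by (induction i) (auto simp: algebra_simps)
  thus ?thesis by (simp add: ibinom_def)
qed

lemma spec_eq_sum:
  assumes "finite F" "\<And>p. p \<notin> F \<Longrightarrow> YW u k p w = 0"
  shows "spec YW u k w = (\<Sum>p\<in>F. YW u k p w)"
  unfolding spec_def using assms by (intro sum.mono_neutral_left) auto

lemma sum_shift_eq_sum:
  fixes g :: "'a::ab_group_add \<Rightarrow> 'w::comm_monoid_add"
  assumes "finite P" "\<And>q. q \<in> F \<Longrightarrow> m + q \<in> P" "\<And>q. q \<notin> F \<Longrightarrow> g q = 0"
  shows "(\<Sum>p\<in>P. g (p - m)) = (\<Sum>q\<in>F. g q)"
proof -
  have "(\<Sum>p\<in>P. g (p - m)) = (\<Sum>q\<in>(\<lambda>p. p - m) ` P. g q)"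
    by (subst sum.reindex) (auto simp: inj_on_def)
  also have "\<dots> = (\<Sum>q\<in>F. g q)"
  proof (rule sum.mono_neutral_right)
    show "F \<subseteq> (\<lambda>p. p - m) ` P"
      using assms(2) by (force intro: image_eqI[of _ _ "m + _"])
  qed (use assms in auto)
  finally show ?thesis .
qed

text \<open>
  The Jacobi identity with v = 1 at l = -1, m0 = 0: the left side collapses to the term i = 0
  because binom(0, i) = 0 for i > 0, and on the right side the vacuum kills every term unless
  p = m.
\<close>
lemma toroidal_jacobi_vacuum_component:
  fixes sW :: "'k::field \<Rightarrow> 'w \<Rightarrow> 'w::ab_group_add" and Y :: "('v,'r::finite,'v) tvo"
    and YW :: "('v,'r,'w) tvo"
  assumes "vector_space sW"
    and vac: "\<And>k m w. YW one k m w = (if k = -1 \<and> m = 0 then w else 0)"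
    and jac: "toroidal_jacobi sW S Y YW"
    and "one \<in> S" "u \<in> S"
    and YW_zero: "\<And>k m. YW u k m 0 = 0"
  shows "YW (Y u (-1) m one) k p w = (if p = m then YW u k m w else 0)"
proof -
  interpret vector_space sW by fact
  have jac_one: "fsum (\<lambda>i. sW (of_int (ibinom 0 i)) (YW (Y u (-1 + int i) m one) (0 + k - int i) p w))
   = fsum (\<lambda>i. sW (of_int ((-1)^i * (ibinom (-1) i)))
        (YW u (0 + -1 - int i) m (YW one (k + int i) (p - m) w)
         - sW (of_int (isign (-1))) (YW one (k + -1 - int i) (p - m) (YW u (0 + int i) m w))))"
    using jac \<open>one \<in> S\<close> \<open>u \<in> S\<close> unfolding toroidal_jacobi_def by blast
  have "fsum (\<lambda>i. sW (of_int (ibinom 0 i)) (YW (Y u (-1 + int i) m one) (0 + k - int i) p w))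
      = YW (Y u (-1) m one) k p w"
    by (subst fsum_eq_single[of 0]) (auto simp: ibinom_zero_left)
  moreover have "fsum (\<lambda>i. sW (of_int ((-1)^i * (ibinom (-1) i)))
        (YW u (0 + -1 - int i) m (YW one (k + int i) (p - m) w)
         - sW (of_int (isign (-1))) (YW one (k + -1 - int i) (p - m) (YW u (0 + int i) m w))))
      = (if p = m then YW u k m w else 0)"
  proof (cases "p = m")
    case True
    \<comment> \<open>the surviving term is i = -1 - k for k < 0 and i = k for k \<ge> 0\<close>
    show ?thesis
    proof (cases "k < 0")
      case neg: True
      show ?thesis
        by (subst fsum_eq_single[of "nat (-1-k)"])
          (use True neg in \<open>auto simp: vac YW_zero ibinom_minus_one_left isign_def
            power_mult_distrib[symmetric]\<close>)
    next
      case nonneg: False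
      show ?thesis
        by (subst fsum_eq_single[of "nat k"])
          (use True nonneg in \<open>auto simp: vac YW_zero ibinom_minus_one_left isign_def
            power_mult_distrib[symmetric]\<close>)
    qed
  qed (auto intro: fsum_eq_zero simp: vac YW_zero)
  ultimately show ?thesis
    using jac_one by simp
qed

locale toroidal_va =
  fixes sV :: "'k::field \<Rightarrow> 'v \<Rightarrow> 'v::ab_group_add"
    and Y :: "('v, 'r::finite, 'v) tvo"
    and one :: 'v
  assumes toroidal_vertex_algebra: "toroidal_vertex_algebra sV Y one"
begin

sublocale V: vector_space sV
  using toroidal_vertex_algebra by (simp add: toroidal_vertex_algebra_def)

lemma linear_Y: "Vector_Spaces.linear sV sV (Y u k m)"
  and truncation_Y: "\<exists>N. \<forall>k\<ge>N. \<forall>m. Y u k m w = 0"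
  and vacuum_Y: "Y one k m w = (if k = -1 \<and> m = 0 then w else 0)"
  and creation_Y: "k \<ge> 0 \<Longrightarrow> Y v k m one = 0"
  and jacobi_Y: "toroidal_jacobi sV UNIV Y Y"
  using toroidal_vertex_algebra by (simp_all add: toroidal_vertex_algebra_def)

lemma Y_zero_right: "Y u k m 0 = 0"
  using linear_Y by (rule linear_map_zero)

lemma Y_add_left: "Y (x + y) k m w = Y x k m w + Y y k m w"
  and Y_scale_left: "Y (sV c x) k m w = sV c (Y x k m w)"
  using toroidal_vertex_algebra unfolding toroidal_vertex_algebra_def tlinear_on_def
  by (metis UNIV_I V.scale_one, metis UNIV_I V.scale_zero_left add.right_neutral)

lemma Y_zero_left: "Y 0 k m w = 0"
  using Y_scale_left[of 0 one] by simp

abbreviation component :: "'v \<Rightarrow> int^'r \<Rightarrow> 'v"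
  where "component u m \<equiv> Y u (-1) m one"

definition supp :: "'v \<Rightarrow> (int^'r) set"
  where "supp u = {m. component u m \<noteq> 0}"

text \<open>The Jacobi identity at n0 = -1 applied to the vacuum, where creation leaves only i = 0.\<close>
lemma component_Y: "component (Y u l m v) p = Y u l m (component v (p - m))"
proof -
  have "fsum (\<lambda>i. sV (of_int (ibinom 0 i)) (Y (Y u (l + int i) m v) (0 + -1 - int i) p one))
   = fsum (\<lambda>i. sV (of_int ((-1)^i * (ibinom l i)))
        (Y u (0 + l - int i) m (Y v (-1 + int i) (p - m) one)
         - sV (of_int (isign l)) (Y v (-1 + l - int i) (p - m) (Y u (0 + int i) m one))))"
    using jacobi_Y unfolding toroidal_jacobi_def by blast
  moreover have "fsum (\<lambda>i. sV (of_int (ibinom 0 i)) (Y (Y u (l + int i) m v) (0 + -1 - int i) p one))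
      = component (Y u l m v) p"
    by (subst fsum_eq_single[of 0]) (auto simp: ibinom_zero_left)
  moreover have "fsum (\<lambda>i. sV (of_int ((-1)^i * (ibinom l i)))
        (Y u (0 + l - int i) m (Y v (-1 + int i) (p - m) one)
         - sV (of_int (isign l)) (Y v (-1 + l - int i) (p - m) (Y u (0 + int i) m one))))
      = Y u l m (component v (p - m))"
    by (subst fsum_eq_single[of 0]) (auto simp: creation_Y Y_zero_right)
  ultimately show ?thesis by simp
qed

lemma component_vacuum_descendant:
  "component (Y a l n one) p = (if p = n then Y a l n one else 0)"
  by (simp add: component_Y vacuum_Y Y_zero_right)

lemma Y_component: "Y (component x m) k p w = (if p = m then Y x k m w else 0)"
  by (rule toroidal_jacobi_vacuum_component[OF V.vector_space_axioms vacuum_Y jacobi_Y])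
    (auto simp: Y_zero_right)

lemma Y_outside_supp: "p \<notin> supp x \<Longrightarrow> Y x k p w = 0"
  using Y_component[of x p k p w] by (simp add: supp_def Y_zero_left)

lemma spec_Y_component: "spec Y (component u m) k v = Y u k m v"
  by (subst spec_eq_sum[of "{m}"]) (auto simp: Y_component)

abbreviation V\<^sub>0 :: "'v set"
  where "V\<^sub>0 \<equiv> V0 sV Y one"

lemma vacuum_descendant_in_V0: "Y a l n one \<in> V\<^sub>0"
  unfolding V0_def by (rule V.span_base) blast

lemma one_in_V0: "one \<in> V\<^sub>0"
  using vacuum_descendant_in_V0[of one "-1" 0] by (simp add: vacuum_Y)

lemma sum_in_V0: "(\<And>i. i \<in> A \<Longrightarrow> f i \<in> V\<^sub>0) \<Longrightarrow> sum f A \<in> V\<^sub>0"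
  unfolding V0_def by (rule V.span_sum)

lemma finite_supp_and_sum_components:
  "u \<in> V\<^sub>0 \<Longrightarrow> finite (supp u) \<and> u = (\<Sum>m\<in>supp u. component u m)"
  unfolding V0_def
proof (induction rule: V.span_induct_alt)
  case base
  then show ?case by (simp add: supp_def Y_zero_left)
next
  case (step c g u)
  from step.hyps obtain a l n where g: "g = Y a l n one" by blast
  let ?A = "insert n (supp u)"
  have fin: "finite ?A" using step.IH by simp
  have supp_sub: "supp (sV c g + u) \<subseteq> ?A"
    by (auto simp: supp_def Y_add_left Y_scale_left g component_vacuum_descendant)
  have "(\<Sum>m\<in>supp (sV c g + u). component (sV c g + u) m) = (\<Sum>m\<in>?A. component (sV c g + u) m)"
    using supp_sub fin by (intro sum.mono_neutral_left) (auto simp: supp_def)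
  also have "\<dots> = sV c (\<Sum>m\<in>?A. component g m) + (\<Sum>m\<in>?A. component u m)"
    by (simp add: Y_add_left Y_scale_left sum.distrib V.scale_sum_right)
  also have "(\<Sum>m\<in>?A. component g m) = g"
    using fin by (simp add: g component_vacuum_descendant)
  also have "(\<Sum>m\<in>?A. component u m) = (\<Sum>m\<in>supp u. component u m)"
    using fin by (intro sum.mono_neutral_right) (auto simp: supp_def)
  also have "\<dots> = u"
    using step.IH by simp
  finally show ?case using finite_subset[OF supp_sub fin] by simp
qed

lemma finite_supp: "u \<in> V\<^sub>0 \<Longrightarrow> finite (supp u)"
  and sum_components: "u \<in> V\<^sub>0 \<Longrightarrow> (\<Sum>m\<in>supp u. component u m) = u"
  using finite_supp_and_sum_components by auto

lemma spec_Y_eq_sum: "u \<in> V\<^sub>0 \<Longrightarrow> spec Y u k v = (\<Sum>m\<in>supp u. Y u k m v)"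
  by (rule spec_eq_sum) (auto simp: finite_supp Y_outside_supp)

lemma Y_in_V0: "v \<in> V\<^sub>0 \<Longrightarrow> Y u l m v \<in> V\<^sub>0"
proof -
  assume v: "v \<in> V\<^sub>0"
  have "Y u l m v = (\<Sum>p\<in>supp v. Y u l m (component v p))"
    using sum_components[OF v] linear_map_sum[OF linear_Y] by metis
  also have "\<dots> = (\<Sum>p\<in>supp v. component (Y u l m v) (p + m))"
    by (simp add: component_Y)
  also have "\<dots> \<in> V\<^sub>0"
    by (intro sum_in_V0 vacuum_descendant_in_V0)
  finally show ?thesis .
qed

end

locale toroidal_V0_module = toroidal_va sV Y one
  for sV :: "'k::field \<Rightarrow> 'v \<Rightarrow> 'v::ab_group_add" and Y :: "('v, 'r::finite, 'v) tvo" and one :: 'v +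
  fixes sW :: "'k \<Rightarrow> 'w \<Rightarrow> 'w::ab_group_add" and YW :: "('v,'r,'w) tvo"
  assumes toroidal_module: "toroidal_module_on sV Y one (V0 sV Y one) sW YW"
begin

sublocale W: vector_space sW
  using toroidal_module by (simp add: toroidal_module_on_def)

lemma linear_YW: "x \<in> V\<^sub>0 \<Longrightarrow> Vector_Spaces.linear sW sW (YW x k m)"
  and truncation_YW: "x \<in> V\<^sub>0 \<Longrightarrow> \<exists>N. \<forall>k\<ge>N. \<forall>m. YW x k m w = 0"
  and vacuum_YW: "YW one k m w = (if k = -1 \<and> m = 0 then w else 0)"
  and jacobi_YW: "toroidal_jacobi sW V\<^sub>0 Y YW"
  using toroidal_module by (simp_all add: toroidal_module_on_def)

lemma YW_zero_right: "x \<in> V\<^sub>0 \<Longrightarrow> YW x k m 0 = 0"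
  using linear_YW by (rule linear_map_zero)

lemma YW_linear_left:
  "x \<in> V\<^sub>0 \<Longrightarrow> y \<in> V\<^sub>0 \<Longrightarrow> YW (sV a x + sV b y) k m w = sW a (YW x k m w) + sW b (YW y k m w)"
  using toroidal_module unfolding toroidal_module_on_def tlinear_on_def by blast

lemma YW_add_left: "x \<in> V\<^sub>0 \<Longrightarrow> y \<in> V\<^sub>0 \<Longrightarrow> YW (x + y) k m w = YW x k m w + YW y k m w"
  using YW_linear_left[of x y 1 1] by simp

lemma YW_scale_left: "x \<in> V\<^sub>0 \<Longrightarrow> YW (sV c x) k m w = sW c (YW x k m w)"
  using YW_linear_left[of x x c 0] by simp

lemma YW_zero_left: "YW 0 k m w = 0"
  using YW_scale_left[OF one_in_V0, of 0] by simp

lemma YW_sum_left: "(\<And>i. i \<in> A \<Longrightarrow> f i \<in> V\<^sub>0) \<Longrightarrow> YW (sum f A) k m w = (\<Sum>i\<in>A. YW (f i) k m w)"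
  by (induction A rule: infinite_finite_induct)
    (simp_all add: YW_zero_left YW_add_left sum_in_V0)

lemma YW_component: "x \<in> V\<^sub>0 \<Longrightarrow> YW (component x m) k p w = (if p = m then YW x k m w else 0)"
  by (rule toroidal_jacobi_vacuum_component[OF W.vector_space_axioms vacuum_YW jacobi_YW one_in_V0])
    (auto simp: YW_zero_right)

lemma YW_outside_supp: "x \<in> V\<^sub>0 \<Longrightarrow> p \<notin> supp x \<Longrightarrow> YW x k p w = 0"
  using YW_component[of x p k p w] by (simp add: supp_def YW_zero_left)

lemma spec_YW_eq_sum:
  "x \<in> V\<^sub>0 \<Longrightarrow> finite F \<Longrightarrow> supp x \<subseteq> F \<Longrightarrow> spec YW x k w = (\<Sum>p\<in>F. YW x k p w)"
  by (rule spec_eq_sum) (auto intro: YW_outside_supp)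

lemma spec_YW_eq_sum_supp: "x \<in> V\<^sub>0 \<Longrightarrow> spec YW x k w = (\<Sum>p\<in>supp x. YW x k p w)"
  by (rule spec_YW_eq_sum) (simp_all add: finite_supp)

lemma spec_YW_component: "x \<in> V\<^sub>0 \<Longrightarrow> spec YW (component x m) k w = YW x k m w"
  by (subst spec_eq_sum[of "{m}"]) (auto simp: YW_component)

lemma unspec_spec: "x \<in> V\<^sub>0 \<Longrightarrow> unspec Y one (spec YW) x k m w = YW x k m w"
  by (simp add: unspec_def spec_YW_component)

context
  fixes u v :: 'v and P :: "(int^'r) set"
  assumes u: "u \<in> V\<^sub>0" and v: "v \<in> V\<^sub>0" and finite_P: "finite P"
    and sums_in_P: "\<And>m q. m \<in> supp u \<Longrightarrow> q \<in> supp v \<Longrightarrow> m + q \<in> P"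
begin

lemma spec_YW_spec_Y:
  "spec YW (spec Y u k v) k' w = (\<Sum>m\<in>supp u. \<Sum>p\<in>P. YW (Y u k m v) k' p w)"
proof -
  have outside_P: "YW (Y u k m v) k' p w = 0" if "m \<in> supp u" "p \<notin> P" for m p
  proof -
    have "p - m \<notin> supp v" using sums_in_P[OF that(1), of "p - m"] that(2) by auto
    hence "p \<notin> supp (Y u k m v)" by (simp add: supp_def component_Y Y_zero_right)
    thus ?thesis by (intro YW_outside_supp Y_in_V0 v)
  qed
  have YW_sum: "YW (\<Sum>m\<in>supp u. Y u k m v) k' p w = (\<Sum>m\<in>supp u. YW (Y u k m v) k' p w)" for p
    by (intro YW_sum_left Y_in_V0 v)
  have "spec YW (spec Y u k v) k' w = spec YW (\<Sum>m\<in>supp u. Y u k m v) k' w"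
    by (simp add: spec_Y_eq_sum u)
  also have "\<dots> = (\<Sum>p\<in>P. YW (\<Sum>m\<in>supp u. Y u k m v) k' p w)"
    using finite_P by (intro spec_eq_sum) (auto simp: YW_sum outside_P)
  also have "\<dots> = (\<Sum>m\<in>supp u. \<Sum>p\<in>P. YW (Y u k m v) k' p w)"
    by (simp add: YW_sum sum.swap[of _ P])
  finally show ?thesis .
qed

lemma spec_YW_spec_YW:
  "spec YW u a (spec YW v b w) = (\<Sum>m\<in>supp u. \<Sum>p\<in>P. YW u a m (YW v b (p - m) w))"
proof -
  have "spec YW u a (spec YW v b w) = (\<Sum>m\<in>supp u. \<Sum>q\<in>supp v. YW u a m (YW v b q w))"
    by (simp add: spec_YW_eq_sum_supp u v linear_map_sum[OF linear_YW[OF u]])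
  also have "\<dots> = (\<Sum>m\<in>supp u. \<Sum>p\<in>P. YW u a m (YW v b (p - m) w))"
    by (intro sum.cong refl sum_shift_eq_sum[symmetric] finite_P sums_in_P)
      (auto simp: YW_outside_supp v YW_zero_right u)
  finally show ?thesis .
qed

lemma spec_YW_spec_YW_swapped:
  "spec YW v b (spec YW u a w) = (\<Sum>m\<in>supp u. \<Sum>p\<in>P. YW v b (p - m) (YW u a m w))"
proof -
  have "spec YW v b (spec YW u a w) = (\<Sum>q\<in>supp v. \<Sum>m\<in>supp u. YW v b q (YW u a m w))"
    by (simp add: spec_YW_eq_sum_supp u v linear_map_sum[OF linear_YW[OF v]])
  also have "\<dots> = (\<Sum>m\<in>supp u. \<Sum>p\<in>P. YW v b (p - m) (YW u a m w))"
    by (subst sum.swap, intro sum.cong refl sum_shift_eq_sum[symmetric] finite_P sums_in_P)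
      (auto simp: YW_outside_supp v)
  finally show ?thesis .
qed

end

lemma uniform_truncation:
  assumes "u \<in> V\<^sub>0" "v \<in> V\<^sub>0"
  obtains K :: nat where "\<And>i m q. i \<ge> K \<Longrightarrow>
    Y u (l + int i) m v = 0 \<and> YW v (n0 + int i) q w = 0 \<and> YW u (m0 + int i) q w = 0"
proof -
  obtain N1 N2 N3 where "\<And>k m. k \<ge> N1 \<Longrightarrow> Y u k m v = 0"
    and "\<And>k q. k \<ge> N2 \<Longrightarrow> YW v k q w = 0" and "\<And>k q. k \<ge> N3 \<Longrightarrow> YW u k q w = 0"
    using truncation_Y truncation_YW assms by meson
  then show ?thesis
    by (intro that[of "nat (max (N1 - l) (max (N2 - n0) (N3 - m0)))"]) auto
qed

lemma jacobi_spec: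
  assumes u: "u \<in> V\<^sub>0" and v: "v \<in> V\<^sub>0"
  shows "fsum (\<lambda>i. sW (of_int (ibinom m0 i)) (spec YW (spec Y u (l + int i) v) (m0 + n0 - int i) w))
      = fsum (\<lambda>i. sW (of_int ((-1)^i * (ibinom l i)))
        (spec YW u (m0 + l - int i) (spec YW v (n0 + int i) w)
         - sW (of_int (isign l)) (spec YW v (n0 + l - int i) (spec YW u (m0 + int i) w))))"
proof -
  define P where "P = (\<lambda>(m, q). m + q) ` (supp u \<times> supp v)"
  have P: "finite P" "\<And>m q. m \<in> supp u \<Longrightarrow> q \<in> supp v \<Longrightarrow> m + q \<in> P"
    using finite_supp[OF u] finite_supp[OF v] by (force simp: P_def)+
  define L where "L m p i = sW (of_int (ibinom m0 i)) (YW (Y u (l + int i) m v) (m0 + n0 - int i) p w)"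
    for m p i
  define R where "R m p i = sW (of_int ((-1)^i * (ibinom l i)))
        (YW u (m0 + l - int i) m (YW v (n0 + int i) (p - m) w)
         - sW (of_int (isign l)) (YW v (n0 + l - int i) (p - m) (YW u (m0 + int i) m w)))"
    for m p i
  obtain K where K: "\<And>i m q. i \<ge> K \<Longrightarrow>
      Y u (l + int i) m v = 0 \<and> YW v (n0 + int i) q w = 0 \<and> YW u (m0 + int i) q w = 0"
    using uniform_truncation[OF u v] by blast
  have fsum_double_sum: "fsum (\<lambda>i. \<Sum>m\<in>supp u. \<Sum>p\<in>P. f m p i) = (\<Sum>m\<in>supp u. \<Sum>p\<in>P. fsum (f m p))"
    if "\<And>m p i. i \<ge> K \<Longrightarrow> f m p i = 0" for f :: "_ \<Rightarrow> _ \<Rightarrow> nat \<Rightarrow> 'w"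
    by (simp add: fsum_sum_commute[of _ K] that)
  have "fsum (\<lambda>i. sW (of_int (ibinom m0 i)) (spec YW (spec Y u (l + int i) v) (m0 + n0 - int i) w))
      = fsum (\<lambda>i. \<Sum>m\<in>supp u. \<Sum>p\<in>P. L m p i)"
    by (simp add: spec_YW_spec_Y[OF u v P] L_def W.scale_sum_right)
  also have "\<dots> = (\<Sum>m\<in>supp u. \<Sum>p\<in>P. fsum (L m p))"
    by (rule fsum_double_sum) (simp add: L_def K YW_zero_left)
  also have "\<dots> = (\<Sum>m\<in>supp u. \<Sum>p\<in>P. fsum (R m p))"
    using jacobi_YW u v unfolding toroidal_jacobi_def L_def R_def by simp
  also have "\<dots> = fsum (\<lambda>i. \<Sum>m\<in>supp u. \<Sum>p\<in>P. R m p i)"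
    by (rule fsum_double_sum[symmetric]) (simp add: R_def K YW_zero_right u v)
  also have "\<dots> = fsum (\<lambda>i. sW (of_int ((-1)^i * (ibinom l i)))
        (spec YW u (m0 + l - int i) (spec YW v (n0 + int i) w)
         - sW (of_int (isign l)) (spec YW v (n0 + l - int i) (spec YW u (m0 + int i) w))))"
    by (simp add: spec_YW_spec_YW[OF u v P] spec_YW_spec_YW_swapped[OF u v P] R_def
        W.scale_sum_right sum_subtractf[symmetric] W.scale_right_diff_distrib)
  finally show ?thesis .
qed

lemma spec_YW_linear_left:
  assumes u: "u \<in> V\<^sub>0" and v: "v \<in> V\<^sub>0"
  shows "spec YW (sV a u + sV b v) k w = sW a (spec YW u k w) + sW b (spec YW v k w)"
proof -
  let ?F = "supp u \<union> supp v"
  have F: "finite ?F" using finite_supp u v by auto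
  have "spec YW (sV a u + sV b v) k w = (\<Sum>p\<in>?F. sW a (YW u k p w) + sW b (YW v k p w))"
    using F u v by (subst spec_eq_sum[of ?F]) (auto simp: YW_linear_left YW_outside_supp)
  also have "\<dots> = sW a (spec YW u k w) + sW b (spec YW v k w)"
    using F u v by (simp add: spec_YW_eq_sum[of _ ?F] sum.distrib W.scale_sum_right)
  finally show ?thesis .
qed

lemma linear_spec_YW:
  assumes u: "u \<in> V\<^sub>0"
  shows "Vector_Spaces.linear sW sW (spec YW u k)"
proof -
  have "Vector_Spaces.linear sW sW (\<lambda>w. \<Sum>p\<in>supp u. YW u k p w)"
    using linear_YW[OF u] W.vector_space_axioms
    by (simp add: vector_space_pair.linear_compose_sum vector_space_pair_def)
  moreover have "spec YW u k = (\<lambda>w. \<Sum>p\<in>supp u. YW u k p w)"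
    using spec_YW_eq_sum_supp[OF u] by auto
  ultimately show ?thesis
    by simp
qed

lemma truncation_spec_YW: "u \<in> V\<^sub>0 \<Longrightarrow> \<exists>N. \<forall>k\<ge>N. spec YW u k w = 0"
  using truncation_YW[of u w] unfolding spec_def by (metis (no_types, lifting) sum.neutral)

lemma vacuum_spec_YW: "spec YW one k w = (if k = -1 then w else 0)"
  by (subst spec_eq_sum[of "{0}"]) (auto simp: vacuum_YW)

lemma va_module_spec: "va_module_on sV (spec Y) one V\<^sub>0 sW (spec YW)"
  unfolding va_module_on_def vlinear_on_def va_jacobi_def
  by (simp add: W.vector_space_axioms spec_YW_linear_left linear_spec_YW truncation_spec_YW
      vacuum_spec_YW jacobi_spec)

end

context toroidal_va
begin

text \<open>A map intertwining the specialized operators intertwines each Y_W(u), because it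
  intertwines the specializations of all components u_{-1,m}1.\<close>
lemma toroidal_hom_iff_va_hom:
  fixes sW1 :: "'k \<Rightarrow> 'w1 \<Rightarrow> 'w1::ab_group_add" and YW1 :: "('v,'r,'w1) tvo"
    and sW2 :: "'k \<Rightarrow> 'w2 \<Rightarrow> 'w2::ab_group_add" and YW2 :: "('v,'r,'w2) tvo"
  assumes "toroidal_V0_module sV Y one sW1 YW1" "toroidal_V0_module sV Y one sW2 YW2"
  shows "toroidal_hom sW1 sW2 V\<^sub>0 YW1 YW2 f \<longleftrightarrow> va_hom sW1 sW2 V\<^sub>0 (spec YW1) (spec YW2) f"
proof -
  interpret W1: toroidal_V0_module sV Y one sW1 YW1 by fact
  interpret W2: toroidal_V0_module sV Y one sW2 YW2 by fact
  show ?thesis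
    unfolding toroidal_hom_def va_hom_def
  proof (intro iffI conjI ballI allI; elim conjE)
    fix u k w assume "Vector_Spaces.linear sW1 sW2 f" "\<forall>u\<in>V\<^sub>0. \<forall>k m w. f (YW1 u k m w) = YW2 u k m (f w)"
      and u: "u \<in> V\<^sub>0"
    then show "f (spec YW1 u k w) = spec YW2 u k (f w)"
      by (simp add: W1.spec_YW_eq_sum_supp W2.spec_YW_eq_sum_supp linear_map_sum)
  next
    fix u k m w assume "\<forall>u\<in>V\<^sub>0. \<forall>k w. f (spec YW1 u k w) = spec YW2 u k (f w)"
      and u: "u \<in> V\<^sub>0"
    then have "f (spec YW1 (component u m) k w) = spec YW2 (component u m) k (f w)"
      using vacuum_descendant_in_V0 by blast
    then show "f (YW1 u k m w) = YW2 u k m (f w)"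
      by (simp add: W1.spec_YW_component W2.spec_YW_component u)
  qed
qed

end

locale va_V0_module = toroidal_va sV Y one
  for sV :: "'k::field \<Rightarrow> 'v \<Rightarrow> 'v::ab_group_add" and Y :: "('v, 'r::finite, 'v) tvo" and one :: 'v +
  fixes sW :: "'k \<Rightarrow> 'w \<Rightarrow> 'w::ab_group_add" and YW0 :: "('v,'w) vo"
  assumes va_module: "va_module_on sV (spec Y) one (V0 sV Y one) sW YW0"
begin

sublocale W: vector_space sW
  using va_module by (simp add: va_module_on_def)

lemma linear_YW0: "x \<in> V\<^sub>0 \<Longrightarrow> Vector_Spaces.linear sW sW (YW0 x k)"
  and truncation_YW0: "x \<in> V\<^sub>0 \<Longrightarrow> \<exists>N. \<forall>k\<ge>N. YW0 x k w = 0"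
  and vacuum_YW0: "YW0 one k w = (if k = -1 then w else 0)"
  and jacobi_YW0: "va_jacobi sW V\<^sub>0 (spec Y) YW0"
  using va_module by (simp_all add: va_module_on_def)

lemma YW0_linear_left:
  "x \<in> V\<^sub>0 \<Longrightarrow> y \<in> V\<^sub>0 \<Longrightarrow> YW0 (sV a x + sV b y) k w = sW a (YW0 x k w) + sW b (YW0 y k w)"
  using va_module unfolding va_module_on_def vlinear_on_def by blast

lemma YW0_zero_left: "YW0 0 k w = 0"
  using YW0_linear_left[OF one_in_V0 one_in_V0, of 0 0] by simp

lemma YW0_sum_left: "(\<And>i. i \<in> A \<Longrightarrow> f i \<in> V\<^sub>0) \<Longrightarrow> YW0 (sum f A) k w = (\<Sum>i\<in>A. YW0 (f i) k w)"
  by (induction A rule: infinite_finite_induct)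
    (simp_all add: YW0_zero_left YW0_linear_left[of _ _ 1 1, simplified] sum_in_V0)

lemma spec_unspec: "x \<in> V\<^sub>0 \<Longrightarrow> spec (unspec Y one YW0) x k w = YW0 x k w"
proof -
  assume x: "x \<in> V\<^sub>0"
  have "spec (unspec Y one YW0) x k w = (\<Sum>m\<in>supp x. YW0 (component x m) k w)"
    using finite_supp[OF x] by (subst spec_eq_sum[of "supp x"]) (auto simp: unspec_def supp_def YW0_zero_left)
  also have "\<dots> = YW0 (\<Sum>m\<in>supp x. component x m) k w"
    by (intro YW0_sum_left[symmetric] vacuum_descendant_in_V0)
  finally show ?thesis
    by (simp add: sum_components x)
qed

lemma truncation_unspec: "u \<in> V\<^sub>0 \<Longrightarrow> \<exists>N. \<forall>k\<ge>N. \<forall>m. unspec Y one YW0 u k m w = 0"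
proof -
  assume u: "u \<in> V\<^sub>0"
  have "\<forall>m. \<exists>N. \<forall>k\<ge>N. YW0 (component u m) k w = 0"
    using truncation_YW0 vacuum_descendant_in_V0 by blast
  then obtain N where N: "\<And>m k. k \<ge> N m \<Longrightarrow> YW0 (component u m) k w = 0"
    by metis
  have "unspec Y one YW0 u k m w = 0" if "k \<ge> Max (N ` supp u)" for k m
  proof (cases "m \<in> supp u")
    case True
    then have "N m \<le> k"
      using finite_supp[OF u] that by (meson Max_ge finite_imageI image_eqI order_trans)
    then show ?thesis by (simp add: unspec_def N)
  qed (simp add: unspec_def supp_def YW0_zero_left)
  then show ?thesis
    by blast
qed

text \<open>The ordinary Jacobi identity for u_{-1,m}1 and v_{-1,p-m}1 is the required one, since
  the specialized l-th mode of u_{-1,m}1 applied to v_{-1,p-m}1 is (u_{l,m} v)_{-1,p}1.\<close>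
lemma jacobi_unspec: "toroidal_jacobi sW V\<^sub>0 Y (unspec Y one YW0)"
  unfolding toroidal_jacobi_def unspec_def
  using jacobi_YW0[unfolded va_jacobi_def, rule_format,
      OF vacuum_descendant_in_V0[of _ "-1"] vacuum_descendant_in_V0[of _ "-1"]]
  by (simp add: component_Y spec_Y_component)

lemma toroidal_module_unspec: "toroidal_module_on sV Y one V\<^sub>0 sW (unspec Y one YW0)"
  unfolding toroidal_module_on_def
proof (intro conjI ballI allI truncation_unspec jacobi_unspec)
  show "vector_space sW"
    by (rule W.vector_space_axioms)
  show "tlinear_on sV sW V\<^sub>0 (unspec Y one YW0)"
    unfolding tlinear_on_def unspec_def
    by (simp add: Y_add_left Y_scale_left YW0_linear_left vacuum_descendant_in_V0)
  show "Vector_Spaces.linear sW sW (unspec Y one YW0 u k m)" for u k m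
    unfolding unspec_def by (simp add: linear_YW0 vacuum_descendant_in_V0)
  show "unspec Y one YW0 one k m w = (if k = -1 \<and> m = 0 then w else 0)" for k m w
    by (simp add: unspec_def vacuum_Y vacuum_YW0 YW0_zero_left)
qed

end

theorem theorem2p12:
  fixes sV :: "'k::field \<Rightarrow> 'v \<Rightarrow> 'v::ab_group_add"
    and Y :: "('v, 'r::finite, 'v) tvo"
    and one :: 'v
  assumes TVA: "toroidal_vertex_algebra sV Y one"
  shows
   "(\<forall>(sW :: 'k \<Rightarrow> 'w \<Rightarrow> 'w::ab_group_add) (YW :: ('v,'r,'w) tvo).
        toroidal_module_on sV Y one (V0 sV Y one) sW YW
        \<longrightarrow> va_module_on sV (spec Y) one (V0 sV Y one) sW (spec YW))
  \<and> (\<forall>(sW :: 'k \<Rightarrow> 'w \<Rightarrow> 'w) (YW0 :: ('v,'w) vo).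
        va_module_on sV (spec Y) one (V0 sV Y one) sW YW0
        \<longrightarrow> toroidal_module_on sV Y one (V0 sV Y one) sW (unspec Y one YW0))
  \<and> (\<forall>(sW :: 'k \<Rightarrow> 'w \<Rightarrow> 'w) (YW :: ('v,'r,'w) tvo).
        toroidal_module_on sV Y one (V0 sV Y one) sW YW
        \<longrightarrow> (\<forall>u\<in>V0 sV Y one. \<forall>m0 m w. unspec Y one (spec YW) u m0 m w = YW u m0 m w))
  \<and> (\<forall>(sW :: 'k \<Rightarrow> 'w \<Rightarrow> 'w) (YW0 :: ('v,'w) vo).
        va_module_on sV (spec Y) one (V0 sV Y one) sW YW0
        \<longrightarrow> (\<forall>u\<in>V0 sV Y one. \<forall>m0 w. spec (unspec Y one YW0) u m0 w = YW0 u m0 w))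
  \<and> (\<forall>(sW1 :: 'k \<Rightarrow> 'w \<Rightarrow> 'w) (YW1 :: ('v,'r,'w) tvo)
        (sW2 :: 'k \<Rightarrow> 'w2 \<Rightarrow> 'w2::ab_group_add) (YW2 :: ('v,'r,'w2) tvo) f.
        toroidal_module_on sV Y one (V0 sV Y one) sW1 YW1
        \<longrightarrow> toroidal_module_on sV Y one (V0 sV Y one) sW2 YW2
        \<longrightarrow> (toroidal_hom sW1 sW2 (V0 sV Y one) YW1 YW2 f
             \<longleftrightarrow> va_hom sW1 sW2 (V0 sV Y one) (spec YW1) (spec YW2) f))"
proof -
  interpret toroidal_va sV Y one
    by (rule toroidal_va.intro[OF TVA])
  note toroidal = toroidal_V0_module.intro[OF toroidal_va_axioms toroidal_V0_module_axioms.intro]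
  note va = va_V0_module.intro[OF toroidal_va_axioms va_V0_module_axioms.intro]
  show ?thesis
    using toroidal_V0_module.va_module_spec[OF toroidal] va_V0_module.toroidal_module_unspec[OF va]
      toroidal_V0_module.unspec_spec[OF toroidal] va_V0_module.spec_unspec[OF va]
      toroidal_hom_iff_va_hom[OF toroidal toroidal]
    by blast
qed

end
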